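(* Let $\mathcal{M}=(E,\mathcal{B})$ be a matroid of rank $r$. The vanishing ideal $I(V_{\mathcal{M}})\subseteq\mathbb{R}[x_e:e\in E]$ is generated by the polynomials $x_e^2-x_e$ for all $e\in E$, the polynomial $\sum_{e\in E}x_e-r$, and the monomials $x^C=\prod_{e\in C}x_e$ for all circuits $C\subseteq E$ of $\mathcal{M}$.
   Context: $V_{\mathcal{M}}=\{\mathbf{1}_B:B\in\mathcal{B}\}\subset\mathbb{R}^E$ is the base configuration; for a point set $V$, $I(V)$ is the ideal of all real polynomials vanishing at every point of $V$. Circuits are the inclusion-minimal dependent sets (sets not contained in any basis). *)

theory Defs
  imports Complex_Main "HOL-Library.Poly_Mapping" "HOL-Library.Indicator_Function"
begin

text \<open>Real multivariate polynomials in variables indexed by 'e: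
  a polynomial is a finitely supported map from monomials (exponent vectors,
  finitely supported maps 'e \<Rightarrow> nat) to real coefficients, with the
  convolution ring structure of Poly_Mapping.\<close>

type_synonym 'e mpoly_real = "('e \<Rightarrow>\<^sub>0 nat) \<Rightarrow>\<^sub>0 real"

definition var :: "'e \<Rightarrow> 'e mpoly_real" where
  "var e = Poly_Mapping.single (Poly_Mapping.single e 1) 1"

definition const :: "real \<Rightarrow> 'e mpoly_real" where
  "const c = Poly_Mapping.single 0 c"

definition eval :: "'e mpoly_real \<Rightarrow> ('e \<Rightarrow> real) \<Rightarrow> real" where
  "eval p a = (\<Sum>mon\<in>Poly_Mapping.keys p. Poly_Mapping.lookup p mon * (\<Prod>e\<in>Poly_Mapping.keys mon. a e ^ Poly_Mapping.lookup mon e))"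

definition vanishing_ideal :: "('e \<Rightarrow> real) set \<Rightarrow> 'e mpoly_real set" where
  "vanishing_ideal V = {p. \<forall>v\<in>V. eval p v = 0}"

definition ideal_gen :: "'e mpoly_real set \<Rightarrow> 'e mpoly_real set" where
  "ideal_gen G = {p. \<exists>F q. finite F \<and> F \<subseteq> G \<and> p = (\<Sum>g\<in>F. q g * g)}"

definition matroid_bases :: "'e::finite set set \<Rightarrow> bool" where
  "matroid_bases \<B> \<longleftrightarrow> \<B> \<noteq> {} \<and>
     (\<forall>B1\<in>\<B>. \<forall>B2\<in>\<B>. \<forall>x\<in>B1 - B2. \<exists>y\<in>B2 - B1. insert y (B1 - {x}) \<in> \<B>)"

definition indep :: "'e set set \<Rightarrow> 'e set \<Rightarrow> bool" where
  "indep \<B> X \<longleftrightarrow> (\<exists>B\<in>\<B>. X \<subseteq> B)"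

definition circuit :: "'e set set \<Rightarrow> 'e set \<Rightarrow> bool" where
  "circuit \<B> C \<longleftrightarrow> \<not> indep \<B> C \<and> (\<forall>D. D \<subset> C \<longrightarrow> indep \<B> D)"

definition base_configuration :: "'e set set \<Rightarrow> ('e \<Rightarrow> real) set" where
  "base_configuration \<B> = (\<lambda>B. indicator B) ` \<B>"

end

theory Submission
  imports Defs
begin

text \<open>Modulo the Boolean relations \<open>x\<^sub>e\<^sup>2 - x\<^sub>e\<close>, every polynomial is congruent to a real
  combination of the polynomials \<open>\<delta>\<^sub>A = (\<Prod>e\<in>A. x\<^sub>e) (\<Prod>e\<notin>A. 1 - x\<^sub>e)\<close>, and \<open>\<delta>\<^sub>A\<close> takes the
  value 1 at \<open>\<one>\<^sub>A\<close> and 0 at every other 0/1-point. A polynomial vanishing on the bases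
  therefore only involves \<open>\<delta>\<^sub>A\<close> with \<open>A\<close> not a basis. If such an \<open>A\<close> is dependent it
  contains a circuit \<open>C\<close> and \<open>\<delta>\<^sub>A\<close> is a multiple of \<open>x\<^sup>C\<close>; if it is independent then
  \<open>|A| < r\<close>, and since \<open>x\<^sub>e \<delta>\<^sub>A \<equiv> [e \<in> A] \<delta>\<^sub>A\<close> we get
  \<open>(\<Sum>\<^sub>e x\<^sub>e - r) \<delta>\<^sub>A \<equiv> (|A| - r) \<delta>\<^sub>A\<close>, so \<open>\<delta>\<^sub>A\<close> lies in the ideal as well.\<close>

lemma poly_mapping_induct_single [case_names zero single add]:
  assumes "P 0" "\<And>k v. P (Poly_Mapping.single k v)" "\<And>f g. P f \<Longrightarrow> P g \<Longrightarrow> P (f + g)"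
  shows "P f"
proof (induction f rule: update_induct)
  case const
  then show ?case using assms(1) .
next
  case (update f a b)
  have "Poly_Mapping.update a b f = f + Poly_Mapping.single a b"
    using update(1)
    by (intro poly_mapping_eqI) (auto simp: lookup_update lookup_add lookup_single in_keys_iff when_def)
  then show ?case using assms(2,3) update(3) by simp
qed

definition eval_monomial :: "('e \<Rightarrow>\<^sub>0 nat) \<Rightarrow> ('e \<Rightarrow> real) \<Rightarrow> real" where
  "eval_monomial m a = (\<Prod>e\<in>Poly_Mapping.keys m. a e ^ Poly_Mapping.lookup m e)"

lemma eval_monomial_superset:
  "finite S \<Longrightarrow> Poly_Mapping.keys m \<subseteq> S \<Longrightarrow>
    eval_monomial m a = (\<Prod>e\<in>S. a e ^ Poly_Mapping.lookup m e)"
  unfolding eval_monomial_def by (rule prod.mono_neutral_left) (auto simp: in_keys_iff)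

lemma eval_monomial_add: "eval_monomial (m1 + m2) a = eval_monomial m1 a * eval_monomial m2 a"
proof -
  let ?S = "Poly_Mapping.keys m1 \<union> Poly_Mapping.keys m2"
  have "Poly_Mapping.keys (m1 + m2) \<subseteq> ?S"
    by (rule keys_add)
  then show ?thesis
    by (simp add: eval_monomial_superset[of ?S] lookup_add power_add prod.distrib)
qed

lemma eval_eq_sum_superset:
  "finite S \<Longrightarrow> Poly_Mapping.keys p \<subseteq> S \<Longrightarrow>
    eval p a = (\<Sum>m\<in>S. Poly_Mapping.lookup p m * eval_monomial m a)"
  unfolding eval_def eval_monomial_def[symmetric]
  by (rule sum.mono_neutral_left) (auto simp: in_keys_iff)

lemma eval_zero [simp]: "eval 0 a = 0"
  by (simp add: eval_def)

lemma eval_single: "eval (Poly_Mapping.single m c) a = c * eval_monomial m a"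
  by (subst eval_eq_sum_superset[of "{m}"]) auto

lemma eval_add [simp]: "eval (p + q) a = eval p a + eval q a"
proof -
  let ?S = "Poly_Mapping.keys p \<union> Poly_Mapping.keys q \<union> Poly_Mapping.keys (p + q)"
  have S: "finite ?S"
    by simp
  show ?thesis
    by (subst (1 2 3) eval_eq_sum_superset[OF S]) (auto simp: lookup_add distrib_right sum.distrib)
qed

lemma eval_mult [simp]: "eval (p * q) a = eval p a * eval q a"
proof (induction p rule: poly_mapping_induct_single)
  case (single k v)
  show ?case
    by (induction q rule: poly_mapping_induct_single)
      (simp_all add: distrib_left mult_single eval_single eval_monomial_add)
qed (simp_all add: distrib_right)

lemma eval_uminus [simp]: "eval (- p) a = - eval p a"
  using eval_add[of "- p" p a] by simp

lemma eval_diff [simp]: "eval (p - q) a = eval p a - eval q a"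
  using eval_add[of p "- q" a] by simp

lemma eval_one [simp]: "eval 1 a = 1"
  using eval_single[of 0 1 a] by (simp add: eval_monomial_def)

lemma eval_const [simp]: "eval (const c) a = c"
  using eval_single[of 0 c a] by (simp add: eval_monomial_def const_def)

lemma eval_var [simp]: "eval (var e) a = a e"
  using eval_single[of "Poly_Mapping.single e 1" 1 a] by (simp add: eval_monomial_def var_def)

lemma eval_sum [simp]: "eval (\<Sum>i\<in>I. f i) a = (\<Sum>i\<in>I. eval (f i) a)"
  by (induction I rule: infinite_finite_induct) simp_all

lemma eval_prod [simp]: "eval (\<Prod>i\<in>I. f i) a = (\<Prod>i\<in>I. eval (f i) a)"
  by (induction I rule: infinite_finite_induct) simp_all

lemma eval_power [simp]: "eval (p ^ n) a = eval p a ^ n"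
  by (induction n) simp_all

lemma const_of_nat: "const (real n) = of_nat n"
  by (simp add: const_def)

lemma const_mult_const: "const a * const b = const (a * b)"
  by (simp add: const_def mult_single)

lemma var_power: "var e ^ n = Poly_Mapping.single (Poly_Mapping.single e n) 1"
  by (induction n) (simp_all add: var_def mult_single single_add[symmetric] add.commute)

lemma ideal_gen_zero: "0 \<in> ideal_gen G"
  unfolding ideal_gen_def by (intro CollectI exI[of _ "{}"]) auto

lemma ideal_gen_generator: "g \<in> G \<Longrightarrow> g \<in> ideal_gen G"
  unfolding ideal_gen_def by (intro CollectI exI[of _ "{g}"] exI[of _ "\<lambda>_. 1"]) auto

lemma ideal_gen_add:
  assumes "p \<in> ideal_gen G" "q \<in> ideal_gen G"
  shows "p + q \<in> ideal_gen G"
proof -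
  obtain F1 q1 where F1: "finite F1" "F1 \<subseteq> G" "p = (\<Sum>g\<in>F1. q1 g * g)"
    using assms(1) unfolding ideal_gen_def by blast
  obtain F2 q2 where F2: "finite F2" "F2 \<subseteq> G" "q = (\<Sum>g\<in>F2. q2 g * g)"
    using assms(2) unfolding ideal_gen_def by blast
  define h where "h g = (if g \<in> F1 then q1 g else 0) + (if g \<in> F2 then q2 g else 0)" for g
  have p: "p = (\<Sum>g\<in>F1 \<union> F2. (if g \<in> F1 then q1 g else 0) * g)"
    unfolding F1(3) by (rule sum.mono_neutral_cong_left) (use F1 F2 in auto)
  have q: "q = (\<Sum>g\<in>F1 \<union> F2. (if g \<in> F2 then q2 g else 0) * g)"
    unfolding F2(3) by (rule sum.mono_neutral_cong_left) (use F1 F2 in auto)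
  have "p + q = (\<Sum>g\<in>F1 \<union> F2. h g * g)"
    unfolding p q h_def by (simp add: sum.distrib distrib_right)
  then show ?thesis
    unfolding ideal_gen_def using F1 F2 by (intro CollectI exI[of _ "F1 \<union> F2"] exI[of _ h]) auto
qed

lemma ideal_gen_mult_left:
  assumes "p \<in> ideal_gen G"
  shows "r * p \<in> ideal_gen G"
proof -
  obtain F q where F: "finite F" "F \<subseteq> G" "p = (\<Sum>g\<in>F. q g * g)"
    using assms unfolding ideal_gen_def by blast
  have "r * p = (\<Sum>g\<in>F. (r * q g) * g)"
    unfolding F(3) by (simp add: sum_distrib_left mult.assoc)
  then show ?thesis
    unfolding ideal_gen_def using F by (intro CollectI exI[of _ F] exI[of _ "\<lambda>g. r * q g"]) auto
qed

lemma ideal_gen_mult_right: "p \<in> ideal_gen G \<Longrightarrow> p * r \<in> ideal_gen G"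
  using ideal_gen_mult_left[of p G r] by (simp add: mult.commute)

lemma ideal_gen_diff: "p \<in> ideal_gen G \<Longrightarrow> q \<in> ideal_gen G \<Longrightarrow> p - q \<in> ideal_gen G"
  using ideal_gen_add[of p G "(- 1) * q"] ideal_gen_mult_left[of q G "- 1"] by simp

lemma ideal_gen_sum: "(\<And>i. i \<in> I \<Longrightarrow> f i \<in> ideal_gen G) \<Longrightarrow> (\<Sum>i\<in>I. f i) \<in> ideal_gen G"
  by (induction I rule: infinite_finite_induct) (auto simp: ideal_gen_zero ideal_gen_add)

lemma ideal_gen_mono: "G \<subseteq> H \<Longrightarrow> ideal_gen G \<subseteq> ideal_gen H"
  unfolding ideal_gen_def by blast

lemma eval_ideal_gen_eq_zero:
  assumes "p \<in> ideal_gen G" "\<And>g. g \<in> G \<Longrightarrow> eval g a = 0"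
  shows "eval p a = 0"
proof -
  obtain F q where F: "finite F" "F \<subseteq> G" "p = (\<Sum>g\<in>F. q g * g)"
    using assms(1) unfolding ideal_gen_def by blast
  show ?thesis
    unfolding F(3) using F(2) assms(2) by (simp add: subset_iff)
qed

definition boolean_relations :: "'e mpoly_real set" where
  "boolean_relations = {var e ^ 2 - var e | e. True}"

definition indicator_poly :: "'e set \<Rightarrow> 'e mpoly_real" where
  "indicator_poly A = (\<Prod>e\<in>A. var e) * (\<Prod>e\<in>- A. 1 - var e)"

lemma eval_boolean_relation: "g \<in> boolean_relations \<Longrightarrow> eval g (indicator B) = 0"
  unfolding boolean_relations_def by (auto simp: indicator_def)

lemma eval_indicator_poly:
  "eval (indicator_poly A) (indicator (B :: 'e::finite set)) = (if A = B then 1 else 0)"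
proof (cases "A = B")
  case False
  then obtain e where "e \<in> A - B \<or> e \<in> B - A"
    by blast
  then show ?thesis
    using False by (auto simp: indicator_poly_def prod_zero_iff indicator_def)
qed (simp add: indicator_poly_def indicator_def)

lemma sum_indicator_poly: "(\<Sum>A\<in>UNIV. indicator_poly A) = (1 :: 'e::finite mpoly_real)"
proof -
  have "(\<Prod>e\<in>(UNIV :: 'e set). var e + (1 - var e)) =
      (\<Sum>A\<in>Pow UNIV. (\<Prod>e\<in>A. var e) * (\<Prod>e\<in>UNIV - A. 1 - var e))"
    by (rule prod_add) simp
  then show ?thesis
    by (simp add: indicator_poly_def Compl_eq_Diff_UNIV)
qed

lemma var_mult_indicator_poly:
  "var e * indicator_poly A - (if e \<in> A then indicator_poly A else 0)
    \<in> ideal_gen (boolean_relations :: 'e::finite mpoly_real set)"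
proof -
  have rel: "var e ^ 2 - var e \<in> ideal_gen boolean_relations"
    by (rule ideal_gen_generator) (auto simp: boolean_relations_def)
  show ?thesis
  proof (cases "e \<in> A")
    case True
    define R where "R = (\<Prod>e\<in>A - {e}. var e) * (\<Prod>e\<in>- A. 1 - var e)"
    have "indicator_poly A = var e * R"
      unfolding indicator_poly_def R_def using prod.remove[of A e var] True by (simp add: mult.assoc)
    then have "var e * indicator_poly A - (if e \<in> A then indicator_poly A else 0) =
        (var e ^ 2 - var e) * R"
      using True by (simp add: power2_eq_square algebra_simps)
    then show ?thesis
      using rel by (simp add: ideal_gen_mult_right)
  next
    case False
    define R where "R = (\<Prod>e\<in>A. var e) * (\<Prod>e\<in>- A - {e}. 1 - var e)"
    have "indicator_poly A = (1 - var e) * R"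
      unfolding indicator_poly_def R_def using prod.remove[of "- A" e "\<lambda>e. 1 - var e"] False
      by (simp add: ac_simps)
    then have "var e * indicator_poly A - (if e \<in> A then indicator_poly A else 0) =
        (- R) * (var e ^ 2 - var e)"
      using False by (simp only: if_False) (simp add: power2_eq_square algebra_simps)
    then show ?thesis
      using ideal_gen_mult_left[OF rel, of "- R"] by simp
  qed
qed

lemma var_mult_indicator_combination:
  "var e * (\<Sum>A\<in>UNIV. const (c A) * indicator_poly A)
     - (\<Sum>A\<in>UNIV. const (if e \<in> A then c A else 0) * indicator_poly A)
    \<in> ideal_gen (boolean_relations :: 'e::finite mpoly_real set)"
proof -
  have "const (if e \<in> A then c A else 0) * indicator_poly A =
      const (c A) * (if e \<in> A then indicator_poly A else 0)" for A
    by (simp add: const_def)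
  then have "var e * (\<Sum>A\<in>UNIV. const (c A) * indicator_poly A)
      - (\<Sum>A\<in>UNIV. const (if e \<in> A then c A else 0) * indicator_poly A) =
    (\<Sum>A\<in>UNIV. const (c A) * (var e * indicator_poly A))
      - (\<Sum>A\<in>UNIV. const (c A) * (if e \<in> A then indicator_poly A else 0))"
    by (simp only: sum_distrib_left mult.left_commute)
  also have "\<dots> = (\<Sum>A\<in>UNIV. const (c A) *
      (var e * indicator_poly A - (if e \<in> A then indicator_poly A else 0)))"
    by (simp only: right_diff_distrib sum_subtractf)
  finally show ?thesis
    by (simp add: ideal_gen_sum ideal_gen_mult_left var_mult_indicator_poly)
qed

definition reduces_to_indicators :: "'e::finite mpoly_real \<Rightarrow> bool" where
  "reduces_to_indicators p \<longleftrightarrow>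
    (\<exists>c. p - (\<Sum>A\<in>UNIV. const (c A) * indicator_poly A) \<in> ideal_gen boolean_relations)"

lemma reduces_to_indicators_add:
  assumes "reduces_to_indicators p" "reduces_to_indicators q"
  shows "reduces_to_indicators (p + q)"
proof -
  obtain c1 c2 where
    c1: "p - (\<Sum>A\<in>UNIV. const (c1 A) * indicator_poly A) \<in> ideal_gen boolean_relations" and
    c2: "q - (\<Sum>A\<in>UNIV. const (c2 A) * indicator_poly A) \<in> ideal_gen boolean_relations"
    using assms unfolding reduces_to_indicators_def by blast
  have eq: "p + q - (\<Sum>A\<in>UNIV. const (c1 A + c2 A) * indicator_poly A) =
      (p - (\<Sum>A\<in>UNIV. const (c1 A) * indicator_poly A))
      + (q - (\<Sum>A\<in>UNIV. const (c2 A) * indicator_poly A))"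
    by (simp add: const_def single_add distrib_right sum.distrib)
  have "p + q - (\<Sum>A\<in>UNIV. const (c1 A + c2 A) * indicator_poly A)
      \<in> ideal_gen boolean_relations"
    unfolding eq by (rule ideal_gen_add[OF c1 c2])
  then show ?thesis
    unfolding reduces_to_indicators_def by (rule exI[of _ "\<lambda>A. c1 A + c2 A"])
qed

lemma reduces_to_indicators_var_mult:
  assumes "reduces_to_indicators p"
  shows "reduces_to_indicators (var e * p)"
proof -
  obtain c where c: "p - (\<Sum>A\<in>UNIV. const (c A) * indicator_poly A) \<in> ideal_gen boolean_relations"
    using assms unfolding reduces_to_indicators_def by blast
  let ?S = "\<Sum>A\<in>UNIV. const (c A) * indicator_poly A"
  let ?S' = "\<Sum>A\<in>UNIV. const (if e \<in> A then c A else 0) * indicator_poly A"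
  have eq: "var e * p - ?S' = var e * (p - ?S) + (var e * ?S - ?S')"
    by (simp add: algebra_simps)
  have "var e * p - ?S' \<in> ideal_gen boolean_relations"
    unfolding eq by (rule ideal_gen_add[OF ideal_gen_mult_left[OF c] var_mult_indicator_combination])
  then show ?thesis
    unfolding reduces_to_indicators_def by (rule exI[of _ "\<lambda>A. if e \<in> A then c A else 0"])
qed

lemma reduces_to_indicators_monomial:
  fixes m :: "'e::finite \<Rightarrow>\<^sub>0 nat"
  shows "reduces_to_indicators (Poly_Mapping.single m v)"
proof (induction m arbitrary: v rule: update_induct)
  case const
  have "Poly_Mapping.single (0 :: 'e \<Rightarrow>\<^sub>0 nat) v - (\<Sum>A\<in>UNIV. const v * indicator_poly A) = 0"
    by (simp add: sum_distrib_left[symmetric] sum_indicator_poly const_def)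
  then show ?case
    unfolding reduces_to_indicators_def using ideal_gen_zero by (intro exI[of _ "\<lambda>_. v"]) simp
next
  case (update m e n)
  have "Poly_Mapping.update e n m = m + Poly_Mapping.single e n"
    using update(1)
    by (intro poly_mapping_eqI) (auto simp: lookup_update lookup_add lookup_single in_keys_iff when_def)
  then have "Poly_Mapping.single (Poly_Mapping.update e n m) v = var e ^ n * Poly_Mapping.single m v"
    by (simp add: var_power mult_single add.commute)
  moreover have "reduces_to_indicators (var e ^ k * Poly_Mapping.single m v)" for k
    by (induction k) (simp_all add: update(3) reduces_to_indicators_var_mult mult.assoc)
  ultimately show ?case
    by simp
qed

lemma boolean_normal_form:
  fixes p :: "'e::finite mpoly_real"
  shows "\<exists>c. p - (\<Sum>A\<in>UNIV. const (c A) * indicator_poly A) \<in> ideal_gen boolean_relations"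
proof -
  have "reduces_to_indicators p"
    by (induction p rule: poly_mapping_induct_single)
      (use reduces_to_indicators_monomial[of 0 0] in \<open>simp_all add: reduces_to_indicators_monomial reduces_to_indicators_add\<close>)
  then show ?thesis
    unfolding reduces_to_indicators_def .
qed

lemma ideal_gen_subset_vanishing_ideal:
  assumes "\<And>g v. g \<in> G \<Longrightarrow> v \<in> V \<Longrightarrow> eval g v = 0"
  shows "ideal_gen G \<subseteq> vanishing_ideal V"
  unfolding vanishing_ideal_def using assms eval_ideal_gen_eq_zero by blast

lemma vanishing_ideal_base_configuration_subset:
  fixes \<B> :: "'e::finite set set"
  assumes "boolean_relations \<subseteq> G" and "\<And>A. A \<notin> \<B> \<Longrightarrow> indicator_poly A \<in> ideal_gen G"
  shows "vanishing_ideal (base_configuration \<B>) \<subseteq> ideal_gen G"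
proof
  fix p
  assume p: "p \<in> vanishing_ideal (base_configuration \<B>)"
  obtain c where c: "p - (\<Sum>A\<in>UNIV. const (c A) * indicator_poly A) \<in> ideal_gen boolean_relations"
    using boolean_normal_form by blast
  have "c B = 0" if "B \<in> \<B>" for B
  proof -
    have "eval p (indicator B) = 0"
      using p that unfolding vanishing_ideal_def base_configuration_def by blast
    moreover have "eval (p - (\<Sum>A\<in>UNIV. const (c A) * indicator_poly A)) (indicator B) = 0"
      using c eval_boolean_relation by (rule eval_ideal_gen_eq_zero)
    ultimately show ?thesis
      by (simp add: eval_indicator_poly if_distrib cong: if_cong)
  qed
  then have "const (c A) * indicator_poly A \<in> ideal_gen G" for A
    using assms(2) by (cases "A \<in> \<B>") (simp_all add: const_def ideal_gen_zero ideal_gen_mult_left)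
  then have "(p - (\<Sum>A\<in>UNIV. const (c A) * indicator_poly A)) + (\<Sum>A\<in>UNIV. const (c A) * indicator_poly A)
      \<in> ideal_gen G"
    using ideal_gen_mono[OF assms(1)] c by (intro ideal_gen_add ideal_gen_sum) auto
  then show "p \<in> ideal_gen G"
    by simp
qed

lemma indicator_poly_in_ideal_if_card_ne:
  fixes A :: "'e::finite set"
  assumes "card A \<noteq> r" "boolean_relations \<subseteq> G" "(\<Sum>e\<in>UNIV. var e) - const (real r) \<in> G"
  shows "indicator_poly A \<in> ideal_gen G"
proof -
  let ?\<sigma> = "(\<Sum>e\<in>UNIV. var e) - const (real r)"
  have rank: "indicator_poly A * ?\<sigma> \<in> ideal_gen G"
    using assms(3) by (intro ideal_gen_mult_left ideal_gen_generator)
  have boolean: "(\<Sum>e\<in>UNIV. var e * indicator_poly A - (if e \<in> A then indicator_poly A else 0))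
      \<in> ideal_gen G"
    by (intro ideal_gen_sum subsetD[OF ideal_gen_mono[OF assms(2)]] var_mult_indicator_poly)
  have "(\<Sum>e\<in>UNIV. if e \<in> A then indicator_poly A else 0) = of_nat (card A) * indicator_poly A"
    by (simp add: sum.If_cases)
  then have "(of_nat (card A) - const (real r)) * indicator_poly A = indicator_poly A * ?\<sigma>
      - (\<Sum>e\<in>UNIV. var e * indicator_poly A - (if e \<in> A then indicator_poly A else 0))"
    by (simp add: sum_subtractf algebra_simps sum_distrib_left)
  then have "const (real (card A) - real r) * indicator_poly A \<in> ideal_gen G"
    using ideal_gen_diff[OF rank boolean] by (simp add: const_of_nat const_def single_diff)
  then have "const (1 / (real (card A) - real r)) * (const (real (card A) - real r) * indicator_poly A)
      \<in> ideal_gen G"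
    by (rule ideal_gen_mult_left)
  moreover have inverse: "const (1 / (real (card A) - real r)) * const (real (card A) - real r) = 1"
    using assms(1) by (simp only: const_mult_const) (simp add: const_def)
  ultimately show ?thesis
    by (simp only: mult.assoc[symmetric] inverse mult_1_left)
qed

lemma exists_circuit_subset:
  fixes A :: "'e::finite set"
  assumes "\<not> indep \<B> A"
  shows "\<exists>C\<subseteq>A. circuit \<B> C"
proof -
  obtain C where C: "C \<subseteq> A" "\<not> indep \<B> C"
    and min: "\<And>D. D \<subseteq> A \<Longrightarrow> \<not> indep \<B> D \<Longrightarrow> card C \<le> card D"
    using ex_has_least_nat[of "\<lambda>D. D \<subseteq> A \<and> \<not> indep \<B> D" A card] assms by blast
  have "indep \<B> D" if "D \<subset> C" for D
    using min[of D] C psubset_card_mono[OF finite that] that by force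
  then show ?thesis
    using C unfolding circuit_def by blast
qed

lemma indicator_poly_in_ideal_if_superset:
  fixes C :: "'e::finite set"
  assumes "C \<subseteq> A"
  shows "indicator_poly A \<in> ideal_gen {\<Prod>e\<in>C. var e}"
proof -
  have "indicator_poly A = (\<Prod>e\<in>C. var e) * ((\<Prod>e\<in>A - C. var e) * (\<Prod>e\<in>- A. 1 - var e))"
    unfolding indicator_poly_def prod.subset_diff[OF assms finite] by (simp only: ac_simps)
  then show ?thesis
    by (simp add: ideal_gen_mult_right ideal_gen_generator)
qed

lemma indicator_poly_in_ideal_if_not_basis:
  fixes \<B> :: "'e::finite set set"
  assumes "\<forall>B\<in>\<B>. card B = r" "A \<notin> \<B>"
    and "boolean_relations \<subseteq> G" "(\<Sum>e\<in>UNIV. var e) - const (real r) \<in> G"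
    and "{(\<Prod>e\<in>C. var e) | C. circuit \<B> C} \<subseteq> G"
  shows "indicator_poly A \<in> ideal_gen G"
proof (cases "indep \<B> A")
  case True
  then obtain B where "B \<in> \<B>" "A \<subset> B"
    using assms(2) unfolding indep_def by blast
  then have "card A \<noteq> r"
    using assms(1) psubset_card_mono[of B A] by auto
  then show ?thesis
    using assms(3,4) by (rule indicator_poly_in_ideal_if_card_ne)
next
  case False
  then obtain C where "C \<subseteq> A" "circuit \<B> C"
    using exists_circuit_subset by blast
  then show ?thesis
    using indicator_poly_in_ideal_if_superset ideal_gen_mono[of "{\<Prod>e\<in>C. var e}" G] assms(5)
    by blast
qed

lemma eval_rank_relation:
  "eval ((\<Sum>e\<in>UNIV. var e) - const (real (card B))) (indicator (B :: 'e::finite set)) = 0"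
  using sum_mult_indicator[of UNIV "\<lambda>_. 1 :: real" B] by simp

lemma eval_circuit_monomial:
  fixes C :: "'e::finite set"
  assumes "circuit \<B> C" "B \<in> \<B>"
  shows "eval (\<Prod>e\<in>C. var e) (indicator B) = 0"
proof -
  obtain e where "e \<in> C" "e \<notin> B"
    using assms unfolding circuit_def indep_def by blast
  then show ?thesis
    by (auto simp: prod_zero_iff indicator_def)
qed

theorem proposition4p4:
  fixes \<B> :: "'e::finite set set" and r :: nat
  assumes "matroid_bases \<B>"
    and "\<forall>B\<in>\<B>. card B = r"
  shows "vanishing_ideal (base_configuration \<B>) =
    ideal_gen ({var e ^ 2 - var e | e. True}
               \<union> {(\<Sum>e\<in>UNIV. var e) - const (real r)}
               \<union> {(\<Prod>e\<in>C. var e) | C. circuit \<B> C})"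
  (is "_ = ideal_gen ?G")
proof (rule antisym)
  have boolean: "boolean_relations \<subseteq> ?G"
    unfolding boolean_relations_def by blast
  then have "indicator_poly A \<in> ideal_gen ?G" if "A \<notin> \<B>" for A
    using assms(2) that by (intro indicator_poly_in_ideal_if_not_basis) auto
  with boolean show "vanishing_ideal (base_configuration \<B>) \<subseteq> ideal_gen ?G"
    by (rule vanishing_ideal_base_configuration_subset)
  show "ideal_gen ?G \<subseteq> vanishing_ideal (base_configuration \<B>)"
  proof (rule ideal_gen_subset_vanishing_ideal)
    fix g v
    assume "g \<in> ?G" and "v \<in> base_configuration \<B>"
    then obtain B where "B \<in> \<B>" "v = indicator B" "g \<in> boolean_relations \<or>
        g = (\<Sum>e\<in>UNIV. var e) - const (real (card B)) \<or> (\<exists>C. circuit \<B> C \<and> g = (\<Prod>e\<in>C. var e))"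
      using assms(2) unfolding base_configuration_def boolean_relations_def by auto
    then show "eval g v = 0"
      using eval_boolean_relation eval_rank_relation eval_circuit_monomial by blast
  qed
qed

end
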